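(* In the setting below, suppose that $$\sum_{t\in\mathcal K}\hat d_t^\top Z^\top f(x_t)\le \sum_{t\in\mathcal K^c}\|Z^\top f(x_t)\|_2\quad\text{for all } Z\in\mathbb{R}^{m\times n}.$$ Then $\bar A$ is the unique global minimizer of $\min_{A\in\mathbb{R}^{n\times m}}\sum_{t=0}^{T-1}\|(\bar A-A)f(x_t)+\bar d_t\|_2$ if and only if for every nonzero $Z\in\mathbb{R}^{m\times n}$, $$\sum_{t\in\mathcal K}\hat d_t^\top Z^\top f(x_t)=\sum_{t\in\mathcal K^c}\|Z^\top f(x_t)\|_2\ \Longrightarrow\ \sum_{t\in\mathcal K}\big|\hat d_t^\top Z^\top f(x_t)\big|<\sum_{t\in\mathcal K}\|Z^\top f(x_t)\|_2 .$$
   Context: $f:\mathbb{R}^n\to\mathbb{R}^m$ is given, $\bar A\in\mathbb{R}^{n\times m}$, $\bar d_0,\dots,\bar d_{T-1}\in\mathbb{R}^n$, and $x_0=0_n$, $x_{t+1}=\bar A f(x_t)+\bar d_t$ for $t=0,\dots,T-1$. $\mathcal K:=\{t\in\{0,\dots,T-1\}:\bar d_t\ne 0\}$, $\mathcal K^c:=\{0,\dots,T-1\}\setminus\mathcal K$, $\hat d_t:=\bar d_t/\|\bar d_t\|_2$ for $t\in\mathcal K$. *)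

theory Defs
  imports "HOL-Analysis.Analysis"
begin

text \<open>Trajectory: x_0 = 0, x_(t+1) = Abar f(x_t) + d_t.
 Vectors in R^n are real^'n, R^m are real^'m; an n x m matrix is real^'m^'n.\<close>
fun traj :: "(real^'n \<Rightarrow> real^'m) \<Rightarrow> real^'m^'n \<Rightarrow> (nat \<Rightarrow> real^'n) \<Rightarrow> nat \<Rightarrow> real^'n" where
  "traj f Abar d 0 = 0"
| "traj f Abar d (Suc t) = Abar *v f (traj f Abar d t) + d t"

definition Kset :: "(nat \<Rightarrow> real^'n) \<Rightarrow> nat \<Rightarrow> nat set" where
  "Kset d T = {t. t < T \<and> d t \<noteq> 0}"

definition Kcset :: "(nat \<Rightarrow> real^'n) \<Rightarrow> nat \<Rightarrow> nat set" where
  "Kcset d T = {t. t < T \<and> d t = 0}"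

definition dhat :: "(nat \<Rightarrow> real^'n) \<Rightarrow> nat \<Rightarrow> real^'n" where
  "dhat d t = (1 / norm (d t)) *\<^sub>R d t"

definition objective :: "(real^'n \<Rightarrow> real^'m) \<Rightarrow> real^'m^'n \<Rightarrow> (nat \<Rightarrow> real^'n) \<Rightarrow> nat
    \<Rightarrow> real^'m^'n \<Rightarrow> real" where
  "objective f Abar d T A = (\<Sum>t<T. norm ((Abar - A) *v f (traj f Abar d t) + d t))"

definition unique_global_minimizer :: "('a \<Rightarrow> real) \<Rightarrow> 'a \<Rightarrow> bool" where
  "unique_global_minimizer g a \<longleftrightarrow> (\<forall>b. g a \<le> g b) \<and> (\<forall>b. (\<forall>c. g b \<le> g c) \<longrightarrow> b = a)"

end

theory Submission
  imports Defs
begin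

text \<open>
  Write A = Abar + Z^T and u_t = Z^T f(x_t). The objective becomes
  sum_K |d_t - u_t| + sum_Kc |u_t|, and since |d - u| \<ge> |d| - sgn d \<bullet> u, its excess over the
  value at Abar splits into sum_K (|d_t - u_t| - |d_t| + sgn d_t \<bullet> u_t) plus the slack of the
  hypothesis, both nonnegative. So a second minimizer exists exactly when some Z \<noteq> 0 makes the
  hypothesis tight and makes every u_t (t \<in> K) parallel to d_t, i.e. |sgn d_t \<bullet> u_t| = |u_t|;
  conversely such a Z, scaled down until no u_t overshoots d_t, is a second minimizer.
\<close>

lemma norm_diff_ge_norm_minus_inner_sgn:
  fixes d u :: "'a::real_inner"
  shows "norm d - sgn d \<bullet> u \<le> norm (d - u)"
proof (cases "d = 0")
  case False
  then have "sgn d \<bullet> (d - u) \<le> norm (d - u)"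
    using norm_cauchy_schwarz[of "sgn d" "d - u"] by (simp add: norm_sgn)
  moreover have "sgn d \<bullet> d = norm d"
    using False by (simp add: sgn_div_norm dot_square_norm power2_eq_square)
  ultimately show ?thesis by (simp add: inner_diff_right)
qed simp

lemma norm_diff_eq_norm_minus_inner_sgn_imp_aligned:
  fixes d u :: "'a::real_inner"
  assumes "d \<noteq> 0" and "norm (d - u) = norm d - sgn d \<bullet> u"
  shows "\<bar>sgn d \<bullet> u\<bar> = norm u"
proof -
  define e where "e = sgn d"
  have e: "norm e = 1" "e \<bullet> d = norm d" "d = norm d *\<^sub>R e"
    using assms(1) by (simp_all add: e_def norm_sgn sgn_div_norm dot_square_norm power2_eq_square)
  have "e \<bullet> (d - u) = norm e * norm (d - u)"
    using assms(2)[folded e_def] e(1,2) by (simp add: inner_diff_right)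
  then have "norm e *\<^sub>R (d - u) = norm (d - u) *\<^sub>R e"
    by (simp only: norm_cauchy_schwarz_eq)
  then have "u = d - norm (d - u) *\<^sub>R e"
    using e(1) by (simp add: algebra_simps)
  then have "u = norm d *\<^sub>R e - norm (d - u) *\<^sub>R e"
    by (simp only: e(3)[symmetric])
  then have u: "u = (norm d - norm (d - u)) *\<^sub>R e"
    by (simp add: scaleR_left_diff_distrib)
  have "e \<bullet> u = norm d - norm (d - u)" "norm u = \<bar>norm d - norm (d - u)\<bar>"
    by (subst u; simp add: e(1) dot_square_norm)+
  then show ?thesis by (simp add: e_def)
qed

lemma norm_diff_scaleR_aligned:
  fixes d u :: "'a::real_inner"
  assumes "d \<noteq> 0" and "\<bar>sgn d \<bullet> u\<bar> = norm u" and "s * (sgn d \<bullet> u) \<le> norm d"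
  shows "norm (d - s *\<^sub>R u) = norm d - s * (sgn d \<bullet> u)"
proof -
  define e where "e = sgn d"
  have e: "norm e = 1" "d = norm d *\<^sub>R e"
    using assms(1) by (simp_all add: e_def norm_sgn sgn_div_norm)
  have "u = norm u *\<^sub>R e \<or> u = - norm u *\<^sub>R e"
    using norm_cauchy_schwarz_abs_eq[of e u] assms(2) e(1) by (simp add: e_def)
  then have "u = (e \<bullet> u) *\<^sub>R e"
  proof
    assume u: "u = norm u *\<^sub>R e"
    have "e \<bullet> u = norm u" by (subst u) (simp add: e(1) dot_square_norm)
    with u show ?thesis by simp
  next
    assume u: "u = - norm u *\<^sub>R e"
    have "e \<bullet> u = - norm u" by (subst u) (simp add: e(1) dot_square_norm)
    with u show ?thesis by simp
  qed
  then have "s *\<^sub>R u = s *\<^sub>R ((e \<bullet> u) *\<^sub>R e)"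
    by (rule arg_cong)
  then have "d - s *\<^sub>R u = norm d *\<^sub>R e - (s * (e \<bullet> u)) *\<^sub>R e"
    using e(2) by simp
  then have "d - s *\<^sub>R u = (norm d - s * (e \<bullet> u)) *\<^sub>R e"
    by (simp add: scaleR_left_diff_distrib)
  then show ?thesis
    using assms(3) e(1) by (simp add: e_def)
qed

lemma abs_inner_sgn_le_norm:
  fixes d u :: "'a::real_inner"
  shows "\<bar>sgn d \<bullet> u\<bar> \<le> norm u"
  using Cauchy_Schwarz_ineq2[of "sgn d" u] by (simp add: norm_sgn split: if_splits)

lemma sum_abs_inner_sgn_less_iff:
  fixes d u :: "'i \<Rightarrow> 'a::real_inner"
  assumes "finite K"
  shows "(\<Sum>t\<in>K. \<bar>sgn (d t) \<bullet> u t\<bar>) < (\<Sum>t\<in>K. norm (u t))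
    \<longleftrightarrow> (\<exists>t\<in>K. \<bar>sgn (d t) \<bullet> u t\<bar> \<noteq> norm (u t))"
proof
  assume "\<exists>t\<in>K. \<bar>sgn (d t) \<bullet> u t\<bar> \<noteq> norm (u t)"
  then show "(\<Sum>t\<in>K. \<bar>sgn (d t) \<bullet> u t\<bar>) < (\<Sum>t\<in>K. norm (u t))"
    using assms abs_inner_sgn_le_norm
    by (intro sum_strict_mono_ex1) (auto simp: order.strict_iff_order)
next
  assume "(\<Sum>t\<in>K. \<bar>sgn (d t) \<bullet> u t\<bar>) < (\<Sum>t\<in>K. norm (u t))"
  then show "\<exists>t\<in>K. \<bar>sgn (d t) \<bullet> u t\<bar> \<noteq> norm (u t)"
    by (metis (no_types, lifting) less_irrefl sum.cong)
qed

lemma ex_pos_scale_le: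
  fixes b c :: "'i \<Rightarrow> real"
  assumes "finite K" and "\<And>t. t \<in> K \<Longrightarrow> 0 < b t"
  shows "\<exists>s>0. \<forall>t\<in>K. s * c t \<le> b t"
proof -
  have "\<forall>\<^sub>F s in at_right 0. s * c t < b t" if "t \<in> K" for t
  proof (rule order_tendstoD(2))
    show "((\<lambda>s. s * c t) \<longlongrightarrow> 0) (at_right 0)"
      by (auto intro!: tendsto_eq_intros)
  qed (use assms(2) that in auto)
  then have "\<forall>\<^sub>F s in at_right 0. 0 < s \<and> (\<forall>t\<in>K. s * c t < b t)"
    using assms(1) by (intro eventually_conj eventually_at_right_less eventually_ball_finite) auto
  then obtain s :: real where "0 < s" "\<forall>t\<in>K. s * c t < b t"
    using eventually_happens' trivial_limit_at_right_real by blast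
  then show ?thesis by (auto intro: less_imp_le)
qed

text \<open>The objective at Abar + Z^T with u_t = Z^T f(x_t): on Kc the residual is -u_t since d_t = 0.\<close>

definition sum_norm_residual :: "'i set \<Rightarrow> 'i set \<Rightarrow> ('i \<Rightarrow> 'a::real_normed_vector) \<Rightarrow> ('i \<Rightarrow> 'a) \<Rightarrow> real"
  where "sum_norm_residual K Kc d u = (\<Sum>t\<in>K. norm (d t - u t)) + (\<Sum>t\<in>Kc. norm (u t))"

lemma sum_norm_residual_zero: "sum_norm_residual K Kc d (\<lambda>_. 0) = (\<Sum>t\<in>K. norm (d t))"
  by (simp add: sum_norm_residual_def)

lemma sum_norm_residual_minus_zero:
  fixes d u :: "'i \<Rightarrow> 'a::real_inner"
  shows "sum_norm_residual K Kc d u - sum_norm_residual K Kc d (\<lambda>_. 0)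
    = (\<Sum>t\<in>K. norm (d t - u t) - (norm (d t) - sgn (d t) \<bullet> u t))
      + ((\<Sum>t\<in>Kc. norm (u t)) - (\<Sum>t\<in>K. sgn (d t) \<bullet> u t))"
  by (simp add: sum_norm_residual_def sum_subtractf)

lemma sum_norm_residual_zero_le:
  fixes d u :: "'i \<Rightarrow> 'a::real_inner"
  assumes "(\<Sum>t\<in>K. sgn (d t) \<bullet> u t) \<le> (\<Sum>t\<in>Kc. norm (u t))"
  shows "sum_norm_residual K Kc d (\<lambda>_. 0) \<le> sum_norm_residual K Kc d u"
proof -
  have "0 \<le> (\<Sum>t\<in>K. norm (d t - u t) - (norm (d t) - sgn (d t) \<bullet> u t))"
    by (intro sum_nonneg) (simp add: norm_diff_ge_norm_minus_inner_sgn)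
  with assms show ?thesis
    using sum_norm_residual_minus_zero[of K Kc d u] by linarith
qed

lemma sum_norm_residual_le_zero_imp_aligned:
  fixes d u :: "'i \<Rightarrow> 'a::real_inner"
  assumes "finite K" and "\<And>t. t \<in> K \<Longrightarrow> d t \<noteq> 0"
    and "(\<Sum>t\<in>K. sgn (d t) \<bullet> u t) \<le> (\<Sum>t\<in>Kc. norm (u t))"
    and "sum_norm_residual K Kc d u \<le> sum_norm_residual K Kc d (\<lambda>_. 0)"
  shows "(\<Sum>t\<in>K. sgn (d t) \<bullet> u t) = (\<Sum>t\<in>Kc. norm (u t))"
    and "\<And>t. t \<in> K \<Longrightarrow> \<bar>sgn (d t) \<bullet> u t\<bar> = norm (u t)"
proof -
  define excess where "excess t = norm (d t - u t) - (norm (d t) - sgn (d t) \<bullet> u t)" for t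
  have excess_nonneg: "\<forall>t\<in>K. 0 \<le> excess t"
    by (simp add: excess_def norm_diff_ge_norm_minus_inner_sgn)
  then have "0 \<le> sum excess K"
    by (simp add: sum_nonneg)
  moreover have "sum excess K + ((\<Sum>t\<in>Kc. norm (u t)) - (\<Sum>t\<in>K. sgn (d t) \<bullet> u t)) \<le> 0"
    using sum_norm_residual_minus_zero[of K Kc d u] assms(4) by (simp add: excess_def)
  ultimately have "sum excess K = 0" and "(\<Sum>t\<in>K. sgn (d t) \<bullet> u t) = (\<Sum>t\<in>Kc. norm (u t))"
    using assms(3) by linarith+
  then show "(\<Sum>t\<in>K. sgn (d t) \<bullet> u t) = (\<Sum>t\<in>Kc. norm (u t))"
    by simp
  fix t assume "t \<in> K"
  with \<open>sum excess K = 0\<close> have "excess t = 0"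
    using sum_nonneg_eq_0_iff[OF assms(1)] excess_nonneg by blast
  then show "\<bar>sgn (d t) \<bullet> u t\<bar> = norm (u t)"
    using norm_diff_eq_norm_minus_inner_sgn_imp_aligned assms(2)[OF \<open>t \<in> K\<close>]
    by (simp add: excess_def)
qed

lemma sum_norm_residual_scaleR_aligned_eq_zero:
  fixes d u :: "'i \<Rightarrow> 'a::real_inner"
  assumes "finite K" and "\<And>t. t \<in> K \<Longrightarrow> d t \<noteq> 0"
    and "(\<Sum>t\<in>K. sgn (d t) \<bullet> u t) = (\<Sum>t\<in>Kc. norm (u t))"
    and "\<And>t. t \<in> K \<Longrightarrow> \<bar>sgn (d t) \<bullet> u t\<bar> = norm (u t)"
  shows "\<exists>s>0. sum_norm_residual K Kc d (\<lambda>t. s *\<^sub>R u t) = sum_norm_residual K Kc d (\<lambda>_. 0)"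
proof -
  obtain s where "s > 0" and s: "\<forall>t\<in>K. s * (sgn (d t) \<bullet> u t) \<le> norm (d t)"
    using ex_pos_scale_le[OF assms(1), of "\<lambda>t. norm (d t)" "\<lambda>t. sgn (d t) \<bullet> u t"] assms(2)
    by auto
  have "sum_norm_residual K Kc d (\<lambda>t. s *\<^sub>R u t)
      = (\<Sum>t\<in>K. norm (d t) - s * (sgn (d t) \<bullet> u t)) + s * (\<Sum>t\<in>Kc. norm (u t))"
    unfolding sum_norm_residual_def using \<open>s > 0\<close> s assms(2,4)
    by (simp add: norm_diff_scaleR_aligned sum_distrib_left)
  also have "\<dots> = sum_norm_residual K Kc d (\<lambda>_. 0)"
    using assms(3) by (simp add: sum_norm_residual_zero sum_subtractf flip: sum_distrib_left)
  finally show ?thesis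
    using \<open>s > 0\<close> by blast
qed

theorem unique_global_minimizer_sum_norm_residual_iff:
  fixes d :: "'i \<Rightarrow> 'a::real_inner" and u :: "'z::real_vector \<Rightarrow> 'i \<Rightarrow> 'a"
  assumes "finite K" and "\<And>t. t \<in> K \<Longrightarrow> d t \<noteq> 0"
    and homogeneous: "\<And>s Z t. u (s *\<^sub>R Z) t = s *\<^sub>R u Z t"
    and descent_bound: "\<And>Z. (\<Sum>t\<in>K. sgn (d t) \<bullet> u Z t) \<le> (\<Sum>t\<in>Kc. norm (u Z t))"
  shows "unique_global_minimizer (\<lambda>Z. sum_norm_residual K Kc d (u Z)) 0 \<longleftrightarrow>
    (\<forall>Z. Z \<noteq> 0 \<longrightarrow> (\<Sum>t\<in>K. sgn (d t) \<bullet> u Z t) = (\<Sum>t\<in>Kc. norm (u Z t))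
      \<longrightarrow> (\<Sum>t\<in>K. \<bar>sgn (d t) \<bullet> u Z t\<bar>) < (\<Sum>t\<in>K. norm (u Z t)))"
    (is "unique_global_minimizer ?\<phi> 0 \<longleftrightarrow> _")
proof -
  have u0: "u 0 = (\<lambda>_. 0)"
    using homogeneous[of 0 0] by auto
  have min0: "?\<phi> 0 \<le> ?\<phi> Z" for Z
    unfolding u0 by (rule sum_norm_residual_zero_le[OF descent_bound])
  show ?thesis
  proof
    assume unique: "unique_global_minimizer ?\<phi> 0"
    show "\<forall>Z. Z \<noteq> 0 \<longrightarrow> (\<Sum>t\<in>K. sgn (d t) \<bullet> u Z t) = (\<Sum>t\<in>Kc. norm (u Z t))
      \<longrightarrow> (\<Sum>t\<in>K. \<bar>sgn (d t) \<bullet> u Z t\<bar>) < (\<Sum>t\<in>K. norm (u Z t))"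
    proof (intro allI impI, rule ccontr)
      fix Z :: 'z
      assume "Z \<noteq> 0" and eq: "(\<Sum>t\<in>K. sgn (d t) \<bullet> u Z t) = (\<Sum>t\<in>Kc. norm (u Z t))"
        and "\<not> (\<Sum>t\<in>K. \<bar>sgn (d t) \<bullet> u Z t\<bar>) < (\<Sum>t\<in>K. norm (u Z t))"
      then have "\<And>t. t \<in> K \<Longrightarrow> \<bar>sgn (d t) \<bullet> u Z t\<bar> = norm (u Z t)"
        using sum_abs_inner_sgn_less_iff[OF assms(1)] by blast
      then obtain s where "s > 0"
        and "sum_norm_residual K Kc d (\<lambda>t. s *\<^sub>R u Z t) = sum_norm_residual K Kc d (\<lambda>_. 0)"
        using sum_norm_residual_scaleR_aligned_eq_zero[OF assms(1,2) eq] by blast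
      moreover have "(\<lambda>t. s *\<^sub>R u Z t) = u (s *\<^sub>R Z)"
        by (simp add: homogeneous fun_eq_iff)
      ultimately have "?\<phi> (s *\<^sub>R Z) = ?\<phi> 0"
        using u0 by simp
      then have "\<forall>Y. ?\<phi> (s *\<^sub>R Z) \<le> ?\<phi> Y"
        using min0 by simp
      then have "s *\<^sub>R Z = 0"
        using unique unfolding unique_global_minimizer_def by blast
      with \<open>s > 0\<close> \<open>Z \<noteq> 0\<close> show False
        by simp
    qed
  next
    assume strict: "\<forall>Z. Z \<noteq> 0 \<longrightarrow> (\<Sum>t\<in>K. sgn (d t) \<bullet> u Z t) = (\<Sum>t\<in>Kc. norm (u Z t))
      \<longrightarrow> (\<Sum>t\<in>K. \<bar>sgn (d t) \<bullet> u Z t\<bar>) < (\<Sum>t\<in>K. norm (u Z t))"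
    have "Z = 0" if "\<forall>Y. ?\<phi> Z \<le> ?\<phi> Y" for Z
    proof (rule ccontr)
      assume "Z \<noteq> 0"
      have le: "sum_norm_residual K Kc d (u Z) \<le> sum_norm_residual K Kc d (\<lambda>_. 0)"
        using that[rule_format, of 0] u0 by simp
      show False
        using strict \<open>Z \<noteq> 0\<close> sum_abs_inner_sgn_less_iff[OF assms(1)]
          sum_norm_residual_le_zero_imp_aligned[OF assms(1,2) descent_bound le]
        by blast
    qed
    then show "unique_global_minimizer ?\<phi> 0"
      unfolding unique_global_minimizer_def using min0 by blast
  qed
qed

lemma unique_global_minimizer_comp_bij:
  assumes "bij h"
  shows "unique_global_minimizer (g \<circ> h) a \<longleftrightarrow> unique_global_minimizer g (h a)"
proof -
  have all_h: "(\<forall>c. P (h c)) \<longleftrightarrow> (\<forall>c. P c)" for P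
    using assms by (metis bij_pointE)
  have "(\<forall>b. (\<forall>c. g (h b) \<le> g c) \<longrightarrow> h b = h a) \<longleftrightarrow> (\<forall>b. (\<forall>c. g b \<le> g c) \<longrightarrow> b = h a)"
    by (rule all_h)
  then show ?thesis
    unfolding unique_global_minimizer_def comp_def all_h[of "\<lambda>c. g (h a) \<le> g c"]
    using all_h[of "\<lambda>c. g _ \<le> g c"] bij_is_inj[OF assms] by (simp add: inj_eq)
qed

lemma dhat_eq_sgn: "dhat d t = sgn (d t)"
  by (simp add: dhat_def sgn_div_norm divide_inverse_commute)

lemma objective_add_transpose:
  "objective f Abar d T (Abar + transpose Z)
    = sum_norm_residual (Kset d T) (Kcset d T) d (\<lambda>t. transpose Z *v f (traj f Abar d t))"
proof -
  have residual: "(Abar - (Abar + transpose Z)) *v y + d t = d t - transpose Z *v y" for y t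
    by (simp only: matrix_vector_mult_diff_rdistrib matrix_vector_mult_add_rdistrib) simp
  have "{..<T} = Kset d T \<union> Kcset d T" and "Kset d T \<inter> Kcset d T = {}"
    and "finite (Kset d T)" and "finite (Kcset d T)"
    by (auto simp: Kset_def Kcset_def)
  then have "objective f Abar d T (Abar + transpose Z)
      = (\<Sum>t\<in>Kset d T. norm (d t - transpose Z *v f (traj f Abar d t)))
        + (\<Sum>t\<in>Kcset d T. norm (d t - transpose Z *v f (traj f Abar d t)))"
    unfolding objective_def residual by (simp add: sum.union_disjoint)
  also have "(\<Sum>t\<in>Kcset d T. norm (d t - transpose Z *v f (traj f Abar d t)))
      = (\<Sum>t\<in>Kcset d T. norm (transpose Z *v f (traj f Abar d t)))"
    by (intro sum.cong) (simp_all add: Kcset_def)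
  finally show ?thesis
    unfolding sum_norm_residual_def .
qed

theorem theorem2:
  fixes f :: "real^'n \<Rightarrow> real^'m" and Abar :: "real^'m^'n"
    and d :: "nat \<Rightarrow> real^'n" and T :: nat
  assumes hyp: "\<forall>Z :: real^'n^'m.
      (\<Sum>t\<in>Kset d T. dhat d t \<bullet> (transpose Z *v f (traj f Abar d t)))
        \<le> (\<Sum>t\<in>Kcset d T. norm (transpose Z *v f (traj f Abar d t)))"
  shows "unique_global_minimizer (objective f Abar d T) Abar \<longleftrightarrow>
    (\<forall>Z :: real^'n^'m. Z \<noteq> 0 \<longrightarrow>
      (\<Sum>t\<in>Kset d T. dhat d t \<bullet> (transpose Z *v f (traj f Abar d t)))
        = (\<Sum>t\<in>Kcset d T. norm (transpose Z *v f (traj f Abar d t)))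
      \<longrightarrow> (\<Sum>t\<in>Kset d T. \<bar>dhat d t \<bullet> (transpose Z *v f (traj f Abar d t))\<bar>)
        < (\<Sum>t\<in>Kset d T. norm (transpose Z *v f (traj f Abar d t))))"
proof -
  define shift :: "real^'n^'m \<Rightarrow> real^'m^'n" where "shift Z = Abar + transpose Z" for Z
  have "bij shift"
    by (rule o_bij[of "\<lambda>A. transpose (A - Abar)"]) (auto simp: shift_def)
  moreover have "shift 0 = Abar"
    using transpose_scalar[of 0] by (simp add: shift_def)
  ultimately have "unique_global_minimizer (objective f Abar d T) Abar
      \<longleftrightarrow> unique_global_minimizer (objective f Abar d T \<circ> shift) 0"
    using unique_global_minimizer_comp_bij by metis
  also have "objective f Abar d T \<circ> shift
      = (\<lambda>Z. sum_norm_residual (Kset d T) (Kcset d T) d (\<lambda>t. transpose Z *v f (traj f Abar d t)))"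
    by (simp add: fun_eq_iff shift_def objective_add_transpose)
  also have "unique_global_minimizer \<dots> 0 \<longleftrightarrow>
    (\<forall>Z :: real^'n^'m. Z \<noteq> 0 \<longrightarrow>
      (\<Sum>t\<in>Kset d T. sgn (d t) \<bullet> (transpose Z *v f (traj f Abar d t)))
        = (\<Sum>t\<in>Kcset d T. norm (transpose Z *v f (traj f Abar d t)))
      \<longrightarrow> (\<Sum>t\<in>Kset d T. \<bar>sgn (d t) \<bullet> (transpose Z *v f (traj f Abar d t))\<bar>)
        < (\<Sum>t\<in>Kset d T. norm (transpose Z *v f (traj f Abar d t))))"
  proof (rule unique_global_minimizer_sum_norm_residual_iff)
    show "finite (Kset d T)" and "\<And>t. t \<in> Kset d T \<Longrightarrow> d t \<noteq> 0"
      by (simp_all add: Kset_def)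
    show "transpose (s *\<^sub>R Z) *v f (traj f Abar d t) = s *\<^sub>R (transpose Z *v f (traj f Abar d t))"
      for s and Z :: "real^'n^'m" and t
      unfolding transpose_scalar by (rule scaleR_matrix_vector_assoc[symmetric])
  qed (use hyp in \<open>simp add: dhat_eq_sgn\<close>)
  finally show ?thesis
    unfolding dhat_eq_sgn .
qed

end
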